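(* Suppose $\mathcal Y$ is finite-dimensional of dimension $d\in\mathbb N$. There exists a constant $c>0$ (depending only on $(\mathcal Y,\|\cdot\|_{\mathcal Y})$, not on the functional) such that the following holds: for every linear functional $H:\underline{\mathcal Z}\to\mathcal Y$ with a formal convolution representation $\underline\kappa$ and every $\underline z\in\underline{\mathcal Z}$, there exist disjoint subsets $J_1,\dots,J_{2^d}\subseteq\mathbb Z_-$ with $$\sum_{t\le0}\|\kappa_t(z_t)\|_{\mathcal Y}\le c\sum_{i=1}^{2^d}\Big\|H\Big(\sum_{t\in J_i}\delta^t(z_t)\Big)\Big\|_{\mathcal Y}<\infty.$$ In particular, the convolution representation of $H$ is proper.
   Context: Let $(\mathcal Z,\|\cdot\|)$ and $(\mathcal Y,\|\cdot\|_{\mathcal Y})$ be normed vector spaces over $\mathbb R$ and $\mathcal B=\{z\in\mathcal Z:\|z\|\le1\}$. Let $\mathbb Z_-=\{0,-1,-2,\dots\}$; elements of $\mathcal Z^{\mathbb Z_-}$ are sequences $\underline z=(z_t)_{t\le0}$. For $t\in\mathbb Z_-$, $\delta^t:\mathcal Z\to\mathcal Z^{\mathbb Z_-}$ maps $z$ to the sequence whose entry at time $t$ is $z$ and all other entries are $0$. Standing assumption: $\underline{\mathcal Z}\subseteq\mathcal Z^{\mathbb Z_-}$ is a set such that (a) $\underline{\mathcal Z}$ is convex and $\underline{\mathcal Z}=\{-\underline z:\underline z\in\underline{\mathcal Z}\}$; (b) $\delta^t(\mathcal B)\subseteq\underline{\mathcal Z}$ for all $t\in\mathbb Z_-$; (c)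 for every $\underline z\in\underline{\mathcal Z}$ and every $J\subseteq\mathbb Z_-$, the sequence $\sum_{t\in J}\delta^t(z_t)$ (equal to $z_t$ at times $t\in J$ and $0$ elsewhere) belongs to $\underline{\mathcal Z}$. A functional $H:\underline{\mathcal Z}\to\mathcal Y$ is linear if it is the restriction of a linear map defined on the linear span of $\underline{\mathcal Z}$. $L(\mathcal Z,\mathcal Y)$ is the space of continuous linear maps $\mathcal Z\to\mathcal Y$. $H$ has a formal convolution representation $\underline\kappa\in L(\mathcal Z,\mathcal Y)^{\mathbb Z_-}$ if $H(\underline z)=\lim_{T\to-\infty}\sum_{t=T}^0\kappa_t(z_t)$ for all $\underline z\in\underline{\mathcal Z}$; the representation is proper if moreover $\sum_{t\le0}\|\kappa_t(z_t)\|_{\mathcal Y}<\infty$ for all $\underline z\in\underline{\mathcal Z}$. *)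

theory Defs
  imports "HOL-Analysis.Analysis"
begin

(* Sequences indexed by Z_- = {0,-1,-2,...} are encoded as functions on nat:
   the value at n :: nat is the entry at time t = -n. *)

definition delta :: "nat \<Rightarrow> 'z::real_normed_vector \<Rightarrow> (nat \<Rightarrow> 'z)" where
  "delta t z = (\<lambda>s. if s = t then z else 0)"

(* the sequence equal to z_t for t in J and 0 elsewhere, i.e. sum_{t in J} delta^t(z_t) *)
definition restr_seq :: "nat set \<Rightarrow> (nat \<Rightarrow> 'z::real_normed_vector) \<Rightarrow> (nat \<Rightarrow> 'z)" where
  "restr_seq J z = (\<lambda>t. if t \<in> J then z t else 0)"

definition admissible_inputs :: "(nat \<Rightarrow> 'z::real_normed_vector) set \<Rightarrow> bool" where
  "admissible_inputs ZZ \<longleftrightarrow>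
     (\<forall>x\<in>ZZ. \<forall>y\<in>ZZ. \<forall>u::real. 0 \<le> u \<and> u \<le> 1 \<longrightarrow> (\<lambda>t. u *\<^sub>R x t + (1 - u) *\<^sub>R y t) \<in> ZZ)
   \<and> ZZ = {(\<lambda>t. - x t) | x. x \<in> ZZ}
   \<and> (\<forall>t. \<forall>z. norm z \<le> 1 \<longrightarrow> delta t z \<in> ZZ)
   \<and> (\<forall>x\<in>ZZ. \<forall>J. restr_seq J x \<in> ZZ)"

inductive_set seq_span :: "(nat \<Rightarrow> 'z::real_normed_vector) set \<Rightarrow> (nat \<Rightarrow> 'z) set"
  for A where
  zero: "(\<lambda>t. 0) \<in> seq_span A"
| base: "x \<in> A \<Longrightarrow> x \<in> seq_span A"
| add: "x \<in> seq_span A \<Longrightarrow> y \<in> seq_span A \<Longrightarrow> (\<lambda>t. x t + y t) \<in> seq_span A"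
| scale: "x \<in> seq_span A \<Longrightarrow> (\<lambda>t. r *\<^sub>R x t) \<in> seq_span A"

definition linear_functional ::
  "(nat \<Rightarrow> 'z::real_normed_vector) set \<Rightarrow> ((nat \<Rightarrow> 'z) \<Rightarrow> 'y::real_normed_vector) \<Rightarrow> bool" where
  "linear_functional ZZ H \<longleftrightarrow>
     (\<exists>L :: (nat \<Rightarrow> 'z) \<Rightarrow> 'y.
        (\<forall>x\<in>seq_span ZZ. \<forall>y\<in>seq_span ZZ. L (\<lambda>t. x t + y t) = L x + L y)
      \<and> (\<forall>x\<in>seq_span ZZ. \<forall>r. L (\<lambda>t. r *\<^sub>R x t) = r *\<^sub>R L x)
      \<and> (\<forall>x\<in>ZZ. H x = L x))"

definition formal_conv_rep ::
  "(nat \<Rightarrow> 'z::real_normed_vector) set \<Rightarrow> ((nat \<Rightarrow> 'z) \<Rightarrow> 'y::real_normed_vector)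
   \<Rightarrow> (nat \<Rightarrow> 'z \<Rightarrow> 'y) \<Rightarrow> bool" where
  "formal_conv_rep ZZ H \<kappa> \<longleftrightarrow>
     (\<forall>t. bounded_linear (\<kappa> t))
   \<and> (\<forall>z\<in>ZZ. (\<lambda>T. \<Sum>t\<le>T. \<kappa> t (z t)) \<longlonglongrightarrow> H z)"

definition proper_conv_rep ::
  "(nat \<Rightarrow> 'z::real_normed_vector) set \<Rightarrow> ((nat \<Rightarrow> 'z) \<Rightarrow> 'y::real_normed_vector)
   \<Rightarrow> (nat \<Rightarrow> 'z \<Rightarrow> 'y) \<Rightarrow> bool" where
  "proper_conv_rep ZZ H \<kappa> \<longleftrightarrow>
     formal_conv_rep ZZ H \<kappa> \<and> (\<forall>z\<in>ZZ. summable (\<lambda>t. norm (\<kappa> t (z t))))"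

end

theory Submission
  imports Defs
begin

(* Fix a basis B of Y. Its coordinate functionals r_b are bounded: on a finite-dimensional space
   the l1-norm of the coordinates is equivalent to the norm, by compactness.  Group the times t
   by the sign pattern {b. r_b (kappa_t z_t) < 0}; there are 2^d patterns.  On one group J every
   r_b (kappa_t z_t) has the same sign, so the partial sums of |r_b (kappa_t z_t)| over J converge
   to +- r_b (H (z restricted to J)).  Summing over the basis and the groups bounds
   sum_t ||kappa_t z_t|| by a constant times the sum of the ||H (z restricted to J)||. *)

lemma bounded_coordinates_convergent_subseq:
  fixes A :: "nat \<Rightarrow> 'b \<Rightarrow> real"
  assumes "finite B" and bounded: "\<And>n b. b \<in> B \<Longrightarrow> \<bar>A n b\<bar> \<le> M"
  obtains l r where "strict_mono r" "\<And>b. b \<in> B \<Longrightarrow> (\<lambda>n. A (r n) b) \<longlonglongrightarrow> l b"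
proof -
  have "bounded ((\<lambda>a. a b) ` range A)" if "b \<in> B" for b
    using bounded[OF that] by (auto simp: bounded_iff)
  then have "\<exists>l r. strict_mono r \<and> (\<forall>e>0. \<forall>\<^sub>F n in sequentially. \<forall>b\<in>B. dist (A (r n) b) (l b) < e)"
    using compact_lemma_general[where f = A and basis = B and unproj = id and proj = "\<lambda>a b. a b"]
      assms(1) by auto
  then obtain l r where "strict_mono r"
    and conv: "\<And>e. e > 0 \<Longrightarrow> \<forall>\<^sub>F n in sequentially. \<forall>b\<in>B. dist (A (r n) b) (l b) < e"
    by blast
  moreover have "(\<lambda>n. A (r n) b) \<longlonglongrightarrow> l b" if "b \<in> B" for b
    using that by (auto intro!: tendstoI elim!: eventually_mono dest!: conv)
  ultimately show thesis using that by blast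
qed

lemma independent_sum_abs_coeffs_le:
  fixes B :: "'a::real_normed_vector set"
  assumes "finite B" "independent B"
  obtains C where "C > 0" "\<And>a. (\<Sum>b\<in>B. \<bar>a b\<bar>) \<le> C * norm (\<Sum>b\<in>B. a b *\<^sub>R b)"
proof (rule ccontr)
  assume "\<not> thesis"
  with that have "\<exists>a. real (Suc n) * norm (\<Sum>b\<in>B. a b *\<^sub>R b) < (\<Sum>b\<in>B. \<bar>a b\<bar>)" for n
    by (metis not_le of_nat_0_less_iff zero_less_Suc)
  then obtain A where A: "\<And>n. real (Suc n) * norm (\<Sum>b\<in>B. A n b *\<^sub>R b) < (\<Sum>b\<in>B. \<bar>A n b\<bar>)"
    by metis
  define a where "a n b = A n b / (\<Sum>b\<in>B. \<bar>A n b\<bar>)" for n b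
  have pos: "(\<Sum>b\<in>B. \<bar>A n b\<bar>) > 0" for n
    by (rule le_less_trans[OF _ A]) simp
  have a_unit: "(\<Sum>b\<in>B. \<bar>a n b\<bar>) = 1" for n
    using pos[of n] by (simp add: a_def sum_divide_distrib[symmetric])
  have a_small: "norm (\<Sum>b\<in>B. a n b *\<^sub>R b) < inverse (real (Suc n))" for n
  proof -
    have "(\<Sum>b\<in>B. a n b *\<^sub>R b) = inverse (\<Sum>b\<in>B. \<bar>A n b\<bar>) *\<^sub>R (\<Sum>b\<in>B. A n b *\<^sub>R b)"
      by (simp add: a_def scaleR_sum_right divide_inverse_commute)
    then show ?thesis
      using A[of n] pos[of n] by (simp add: field_simps)
  qed
  have a_bounded: "\<bar>a n b\<bar> \<le> 1" if "b \<in> B" for n b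
    using member_le_sum[of b B "\<lambda>b. \<bar>a n b\<bar>"] that assms(1) a_unit by simp
  obtain l r where "strict_mono r" and lim: "\<And>b. b \<in> B \<Longrightarrow> (\<lambda>n. a (r n) b) \<longlonglongrightarrow> l b"
    using bounded_coordinates_convergent_subseq[where A = a, OF assms(1) a_bounded] by blast
  have "(\<lambda>n. \<Sum>b\<in>B. \<bar>a (r n) b\<bar>) \<longlonglongrightarrow> (\<Sum>b\<in>B. \<bar>l b\<bar>)"
    by (intro tendsto_sum tendsto_rabs lim)
  then have l_unit: "(\<Sum>b\<in>B. \<bar>l b\<bar>) = 1"
    by (simp add: a_unit LIMSEQ_const_iff)
  have "(\<lambda>n. \<Sum>b\<in>B. a (r n) b *\<^sub>R b) \<longlonglongrightarrow> (\<Sum>b\<in>B. l b *\<^sub>R b)"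
    by (intro tendsto_sum tendsto_scaleR lim tendsto_const)
  moreover have "(\<lambda>n. \<Sum>b\<in>B. a (r n) b *\<^sub>R b) \<longlonglongrightarrow> 0"
  proof (rule tendsto_norm_zero_cancel, rule Lim_null_comparison)
    have "norm (\<Sum>b\<in>B. a (r n) b *\<^sub>R b) \<le> inverse (real (Suc n))" for n
    proof -
      have "norm (\<Sum>b\<in>B. a (r n) b *\<^sub>R b) < inverse (real (Suc (r n)))"
        by (rule a_small)
      also have "\<dots> \<le> inverse (real (Suc n))"
        using seq_suble[OF \<open>strict_mono r\<close>, of n] by (intro le_imp_inverse_le) auto
      finally show ?thesis by simp
    qed
    then show "\<forall>\<^sub>F n in sequentially. norm (norm (\<Sum>b\<in>B. a (r n) b *\<^sub>R b)) \<le> inverse (real (Suc n))"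
      by simp
  qed (rule LIMSEQ_inverse_real_of_nat)
  ultimately have "(\<Sum>b\<in>B. l b *\<^sub>R b) = 0"
    by (rule LIMSEQ_unique)
  with assms have "\<forall>b\<in>B. l b = 0"
    by (auto simp: dependent_finite)
  with l_unit show False by simp
qed

lemma representation_bounded:
  fixes B :: "'a::real_normed_vector set"
  assumes "finite B" "independent B" "span B = UNIV"
  obtains C where "C > 0" "\<And>y b. \<bar>representation B y b\<bar> \<le> C * norm y"
proof -
  obtain C where "C > 0"
    and C: "\<And>a. (\<Sum>b\<in>B. \<bar>a b\<bar>) \<le> C * norm (\<Sum>b\<in>B. a b *\<^sub>R b)"
    using independent_sum_abs_coeffs_le[OF assms(1,2)] by blast
  have "\<bar>representation B y b\<bar> \<le> C * norm y" for y b
  proof (cases "b \<in> B")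
    case True
    then have "\<bar>representation B y b\<bar> \<le> (\<Sum>b\<in>B. \<bar>representation B y b\<bar>)"
      using assms(1) by (intro member_le_sum) auto
    also have "\<dots> \<le> C * norm (\<Sum>b\<in>B. representation B y b *\<^sub>R b)"
      by (rule C)
    also have "(\<Sum>b\<in>B. representation B y b *\<^sub>R b) = y"
      using sum_representation_eq[OF assms(2) _ assms(1) order_refl, of y] assms(3) by simp
    finally show ?thesis .
  next
    case False
    then have "representation B y b = 0"
      using representation_ne_zero by blast
    with \<open>C > 0\<close> show ?thesis by simp
  qed
  with \<open>C > 0\<close> show thesis by (rule that)
qed

lemma bounded_linear_representation:
  fixes B :: "'a::real_normed_vector set"
  assumes "finite B" "independent B" "span B = UNIV"
  shows "bounded_linear (\<lambda>y. representation B y b)"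
proof -
  obtain C where "C > 0" and C: "\<And>y b. \<bar>representation B y b\<bar> \<le> C * norm y"
    using representation_bounded[OF assms] by blast
  show ?thesis
  proof (intro bounded_linear_intro[where K = C])
    show "representation B (x + y) b = representation B x b + representation B y b" for x y
      using assms by (simp add: representation_add)
    show "representation B (r *\<^sub>R x) b = r *\<^sub>R representation B x b" for r x
      using assms by (simp add: representation_scale)
    show "norm (representation B y b) \<le> norm y * C" for y
      using C[of y b] by (simp add: mult.commute)
  qed
qed

lemma norm_le_sum_abs_representation:
  fixes B :: "'a::real_normed_vector set"
  assumes "finite B" "independent B" "span B = UNIV"
  shows "norm y \<le> (\<Sum>b\<in>B. \<bar>representation B y b\<bar> * norm b)"
proof -
  have "norm y = norm (\<Sum>b\<in>B. representation B y b *\<^sub>R b)"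
    using sum_representation_eq[OF assms(2) _ assms(1) order_refl, of y] assms(3) by simp
  also have "\<dots> \<le> (\<Sum>b\<in>B. norm (representation B y b *\<^sub>R b))"
    by (rule norm_sum)
  also have "\<dots> = (\<Sum>b\<in>B. \<bar>representation B y b\<bar> * norm b)"
    by simp
  finally show ?thesis .
qed

definition sign_pattern :: "'a::real_vector set \<Rightarrow> 'a \<Rightarrow> 'a set" where
  "sign_pattern B y = {b \<in> B. representation B y b < 0}"

lemma abs_representation_sums:
  fixes B :: "'a::real_normed_vector set" and x :: "nat \<Rightarrow> 'a"
  assumes "finite B" "independent B" "span B = UNIV"
    and lim: "\<And>S. S \<subseteq> B \<Longrightarrow>
      (\<lambda>N. \<Sum>t\<le>N. if sign_pattern B (x t) = S then x t else 0) \<longlonglongrightarrow> h S"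
  shows "(\<lambda>t. \<bar>representation B (x t) b\<bar>) sums
           (\<Sum>S\<in>Pow B. (if b \<in> S then -1 else 1) * representation B (h S) b)"
proof -
  define r where "r y = representation B y b" for y
  define s where "s S = (if b \<in> S then -1 else 1 :: real)" for S
  define x_on where "x_on S t = (if sign_pattern B (x t) = S then x t else 0)" for S t
  have r: "bounded_linear r"
    unfolding r_def by (rule bounded_linear_representation[OF assms(1-3)])
  have abs_r: "\<bar>r (x t)\<bar> = (\<Sum>S\<in>Pow B. s S * r (x_on S t))" for t
  proof -
    have "(\<Sum>S\<in>Pow B. s S * r (x_on S t))
        = (\<Sum>S\<in>Pow B. if sign_pattern B (x t) = S then s S * r (x t) else 0)"
      by (intro sum.cong) (auto simp: x_on_def r_def representation_zero)
    also have "\<dots> = s (sign_pattern B (x t)) * r (x t)"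
      using assms(1) by (simp add: sign_pattern_def)
    also have "\<dots> = \<bar>r (x t)\<bar>"
    proof (cases "b \<in> B")
      case True
      then show ?thesis by (simp add: s_def sign_pattern_def r_def)
    next
      case False
      then have "r (x t) = 0"
        unfolding r_def using representation_ne_zero by blast
      then show ?thesis by simp
    qed
    finally show ?thesis ..
  qed
  have "(\<Sum>t\<le>N. \<bar>r (x t)\<bar>) = (\<Sum>S\<in>Pow B. s S * r (\<Sum>t\<le>N. x_on S t))" for N
  proof -
    have "(\<Sum>t\<le>N. \<bar>r (x t)\<bar>) = (\<Sum>S\<in>Pow B. \<Sum>t\<le>N. s S * r (x_on S t))"
      unfolding abs_r by (rule sum.swap)
    also have "\<dots> = (\<Sum>S\<in>Pow B. s S * r (\<Sum>t\<le>N. x_on S t))"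
      by (simp add: linear_sum[OF bounded_linear.linear[OF r]] sum_distrib_left)
    finally show ?thesis .
  qed
  moreover have "(\<lambda>N. \<Sum>S\<in>Pow B. s S * r (\<Sum>t\<le>N. x_on S t)) \<longlonglongrightarrow> (\<Sum>S\<in>Pow B. s S * r (h S))"
    unfolding x_on_def by (intro tendsto_sum tendsto_mult_left bounded_linear.tendsto[OF r] lim) auto
  ultimately show ?thesis
    unfolding sums_def_le by (simp add: r_def s_def)
qed

lemma summable_norm_le_sign_pattern_sums:
  fixes B :: "'a::real_normed_vector set"
  assumes "finite B" "independent B" "span B = UNIV"
  obtains K where "K > 0"
    "\<And>x h. (\<And>S. S \<subseteq> B \<Longrightarrow>
        (\<lambda>N. \<Sum>t\<le>N. if sign_pattern B (x t) = S then x t else 0) \<longlonglongrightarrow> h S) \<Longrightarrow>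
      summable (\<lambda>t. norm (x t)) \<and> (\<Sum>t. norm (x t)) \<le> K * (\<Sum>S\<in>Pow B. norm (h S))"
proof -
  obtain C where "C > 0" and C: "\<And>y b. \<bar>representation B y b\<bar> \<le> C * norm y"
    using representation_bounded[OF assms] by blast
  show thesis
  proof (rule that)
    show "C * (\<Sum>b\<in>B. norm b) + 1 > 0"
      using \<open>C > 0\<close> by (intro add_nonneg_pos mult_nonneg_nonneg sum_nonneg) auto
    fix x :: "nat \<Rightarrow> 'a" and h :: "'a set \<Rightarrow> 'a"
    assume lim: "\<And>S. S \<subseteq> B \<Longrightarrow>
      (\<lambda>N. \<Sum>t\<le>N. if sign_pattern B (x t) = S then x t else 0) \<longlonglongrightarrow> h S"
    define L where "L b = (\<Sum>S\<in>Pow B. (if b \<in> S then -1 else 1) * representation B (h S) b)" for b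
    define M where "M = (\<Sum>S\<in>Pow B. norm (h S))"
    have "M \<ge> 0"
      unfolding M_def by (simp add: sum_nonneg)
    have sums: "(\<lambda>t. \<Sum>b\<in>B. \<bar>representation B (x t) b\<bar> * norm b) sums (\<Sum>b\<in>B. L b * norm b)"
      unfolding L_def by (intro sums_sum sums_mult2 abs_representation_sums[OF assms lim])
    have norm_le: "norm (x t) \<le> (\<Sum>b\<in>B. \<bar>representation B (x t) b\<bar> * norm b)" for t
      by (rule norm_le_sum_abs_representation[OF assms])
    have summable: "summable (\<lambda>t. norm (x t))"
      by (rule summable_comparison_test'[OF sums_summable[OF sums]]) (simp add: norm_le)
    have L_le: "L b \<le> C * M" for b
    proof -
      have "L b \<le> (\<Sum>S\<in>Pow B. \<bar>representation B (h S) b\<bar>)"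
        unfolding L_def by (intro sum_mono) auto
      also have "\<dots> \<le> (\<Sum>S\<in>Pow B. C * norm (h S))"
        by (intro sum_mono C)
      finally show ?thesis
        by (simp add: M_def sum_distrib_left)
    qed
    have "(\<Sum>t. norm (x t)) \<le> (\<Sum>b\<in>B. L b * norm b)"
      by (rule sums_le[OF norm_le summable_sums[OF summable] sums])
    also have "\<dots> \<le> (\<Sum>b\<in>B. C * M * norm b)"
      by (intro sum_mono mult_right_mono L_le) simp
    also have "\<dots> = C * M * (\<Sum>b\<in>B. norm b)"
      by (rule sum_distrib_left[symmetric])
    also have "\<dots> \<le> (C * (\<Sum>b\<in>B. norm b) + 1) * M"
      using \<open>M \<ge> 0\<close> by (simp add: algebra_simps)
    finally show "summable (\<lambda>t. norm (x t)) \<and>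
        (\<Sum>t. norm (x t)) \<le> (C * (\<Sum>b\<in>B. norm b) + 1) * (\<Sum>S\<in>Pow B. norm (h S))"
      using summable by (simp add: M_def)
  qed
qed

lemma formal_conv_rep_restr_seq_LIMSEQ:
  assumes "admissible_inputs ZZ" "formal_conv_rep ZZ H \<kappa>" "z \<in> ZZ"
  shows "(\<lambda>N. \<Sum>t\<le>N. if t \<in> J then \<kappa> t (z t) else 0) \<longlonglongrightarrow> H (restr_seq J z)"
proof -
  have "restr_seq J z \<in> ZZ"
    using assms(1,3) unfolding admissible_inputs_def by blast
  then have "(\<lambda>N. \<Sum>t\<le>N. \<kappa> t (restr_seq J z t)) \<longlonglongrightarrow> H (restr_seq J z)"
    using assms(2) unfolding formal_conv_rep_def by blast
  moreover have "\<kappa> t (restr_seq J z t) = (if t \<in> J then \<kappa> t (z t) else 0)" for t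
    using assms(2) unfolding formal_conv_rep_def restr_seq_def by (simp add: linear_simps)
  ultimately show ?thesis by simp
qed

lemma finite_dimensional_basis:
  fixes B0 :: "'a::real_vector set"
  assumes "finite B0" "span B0 = UNIV"
  obtains B :: "'a set" where "finite B" "independent B" "span B = UNIV" "card B = dim (UNIV :: 'a set)"
proof -
  obtain B :: "'a set"
    where "B \<subseteq> UNIV" and B: "independent B" "UNIV \<subseteq> span B" "card B = dim (UNIV :: 'a set)"
    by (fact basis_exists)
  have "finite B"
    using independent_span_bound[OF assms(1) B(1)] assms(2) by auto
  moreover have "span B = UNIV"
    using B(2) by auto
  ultimately show thesis
    using that B(1,3) by blast
qed

lemma formal_conv_rep_sign_partition_bound:
  fixes B :: "'y::real_normed_vector set"
  assumes "finite B" "independent B" "span B = UNIV" "card B = d"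
  shows "\<exists>c>0. \<forall>(ZZ :: (nat \<Rightarrow> 'z::real_normed_vector) set) (H :: (nat \<Rightarrow> 'z) \<Rightarrow> 'y) \<kappa>.
           admissible_inputs ZZ \<and> formal_conv_rep ZZ H \<kappa> \<longrightarrow>
           (\<forall>z\<in>ZZ. \<exists>J :: nat \<Rightarrow> nat set.
               (\<forall>i\<in>{1..2^d}. \<forall>j\<in>{1..2^d}. i \<noteq> j \<longrightarrow> J i \<inter> J j = {})
             \<and> summable (\<lambda>t. norm (\<kappa> t (z t)))
             \<and> (\<Sum>t. norm (\<kappa> t (z t))) \<le> c * (\<Sum>i=1..2^d. norm (H (restr_seq (J i) z))))
           \<and> proper_conv_rep ZZ H \<kappa>"
proof -
  obtain K where "K > 0" and K: "\<And>x h. (\<And>S. S \<subseteq> B \<Longrightarrow>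
        (\<lambda>N. \<Sum>t\<le>N. if sign_pattern B (x t) = S then x t else 0) \<longlonglongrightarrow> h S) \<Longrightarrow>
      summable (\<lambda>t. norm (x t)) \<and> (\<Sum>t. norm (x t)) \<le> K * (\<Sum>S\<in>Pow B. norm (h S))"
    by (fact summable_norm_le_sign_pattern_sums[OF assms(1-3)])
  obtain g :: "nat \<Rightarrow> 'y set" where g: "bij_betw g {1..2^d} (Pow B)"
    using ex_bij_betw_nat_finite_1[of "Pow B"] assms(1,4) by (auto simp: card_Pow)
  have bound: "\<exists>J :: nat \<Rightarrow> nat set.
        (\<forall>i\<in>{1..2^d}. \<forall>j\<in>{1..2^d}. i \<noteq> j \<longrightarrow> J i \<inter> J j = {})
      \<and> summable (\<lambda>t. norm (\<kappa> t (z t)))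
      \<and> (\<Sum>t. norm (\<kappa> t (z t))) \<le> K * (\<Sum>i=1..2^d. norm (H (restr_seq (J i) z)))"
    if "admissible_inputs ZZ" "formal_conv_rep ZZ H \<kappa>" "z \<in> ZZ"
    for ZZ :: "(nat \<Rightarrow> 'z) set" and H :: "(nat \<Rightarrow> 'z) \<Rightarrow> 'y" and \<kappa> z
  proof -
    define J where "J i = {t. sign_pattern B (\<kappa> t (z t)) = g i}" for i
    have "(\<lambda>N. \<Sum>t\<le>N. if sign_pattern B (\<kappa> t (z t)) = S then \<kappa> t (z t) else 0)
        \<longlonglongrightarrow> H (restr_seq {t. sign_pattern B (\<kappa> t (z t)) = S} z)" for S
      using formal_conv_rep_restr_seq_LIMSEQ[OF that, of "{t. sign_pattern B (\<kappa> t (z t)) = S}"] by simp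
    then have "summable (\<lambda>t. norm (\<kappa> t (z t))) \<and> (\<Sum>t. norm (\<kappa> t (z t))) \<le>
        K * (\<Sum>S\<in>Pow B. norm (H (restr_seq {t. sign_pattern B (\<kappa> t (z t)) = S} z)))"
      by (rule K)
    moreover have "\<forall>i\<in>{1..2^d}. \<forall>j\<in>{1..2^d}. i \<noteq> j \<longrightarrow> J i \<inter> J j = {}"
      using bij_betw_imp_inj_on[OF g] by (auto simp: J_def inj_on_def)
    moreover have "(\<Sum>S\<in>Pow B. norm (H (restr_seq {t. sign_pattern B (\<kappa> t (z t)) = S} z)))
        = (\<Sum>i=1..2^d. norm (H (restr_seq (J i) z)))"
      using sum.reindex_bij_betw[OF g, of "\<lambda>S. norm (H (restr_seq {t. sign_pattern B (\<kappa> t (z t)) = S} z))"]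
      by (simp add: J_def)
    ultimately show ?thesis
      by (intro exI[of _ J]) simp
  qed
  have proper: "proper_conv_rep ZZ H \<kappa>" if "admissible_inputs ZZ" "formal_conv_rep ZZ H \<kappa>"
    for ZZ :: "(nat \<Rightarrow> 'z) set" and H :: "(nat \<Rightarrow> 'z) \<Rightarrow> 'y" and \<kappa>
    using bound[OF that] that(2) unfolding proper_conv_rep_def by blast
  show ?thesis
    using \<open>K > 0\<close> by (intro exI[of _ K] conjI allI impI ballI) (blast intro: bound proper)+
qed

theorem lemma3p9:
  fixes d :: nat
  assumes fin_dim: "\<exists>B :: 'y::real_normed_vector set. finite B \<and> span B = UNIV"
    and dim_Y: "dim (UNIV :: 'y set) = d"
  shows "\<exists>c>0. \<forall>(ZZ :: (nat \<Rightarrow> 'z::real_normed_vector) set) (H :: (nat \<Rightarrow> 'z) \<Rightarrow> 'y) \<kappa>.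
           admissible_inputs ZZ \<and> linear_functional ZZ H \<and> formal_conv_rep ZZ H \<kappa> \<longrightarrow>
           (\<forall>z\<in>ZZ. \<exists>J :: nat \<Rightarrow> nat set.
               (\<forall>i\<in>{1..2^d}. \<forall>j\<in>{1..2^d}. i \<noteq> j \<longrightarrow> J i \<inter> J j = {})
             \<and> summable (\<lambda>t. norm (\<kappa> t (z t)))
             \<and> (\<Sum>t. norm (\<kappa> t (z t))) \<le> c * (\<Sum>i=1..2^d. norm (H (restr_seq (J i) z))))
           \<and> proper_conv_rep ZZ H \<kappa>"
proof -
  obtain B0 :: "'y set" where B0: "finite B0" "span B0 = UNIV"
    using fin_dim by blast
  obtain B :: "'y set"
    where B: "finite B" "independent B" "span B = UNIV" "card B = dim (UNIV :: 'y set)"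
    by (fact finite_dimensional_basis[OF B0])
  show ?thesis
    using formal_conv_rep_sign_partition_bound[OF B(1-3) B(4)[unfolded dim_Y]]
    by (rule ex_forward) blast
qed

end
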